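(* Let $I$ be a regular ideal of a local ring $R$. Then $I^n$ can be generated by two elements for some integer $n>1$ if and only if $I$ can be generated by two elements and $I^2=aI$ for some $a\in I$.
   Context: All rings are commutative with identity; a local ring is a ring with a unique maximal ideal (not necessarily Noetherian). An ideal is regular if it contains a nonzerodivisor. *)

theory Defs
  imports Main
begin

definition is_ideal :: "'a::comm_ring_1 set \<Rightarrow> bool" where
  "is_ideal I \<longleftrightarrow> 0 \<in> I \<and> (\<forall>x\<in>I. \<forall>y\<in>I. x + y \<in> I) \<and> (\<forall>r. \<forall>x\<in>I. r * x \<in> I)"

definition ideal_generated :: "'a::comm_ring_1 set \<Rightarrow> 'a set" where
  "ideal_generated S = \<Inter>{J. is_ideal J \<and> S \<subseteq> J}"

definition ideal_mult :: "'a::comm_ring_1 set \<Rightarrow> 'a set \<Rightarrow> 'a set" where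
  "ideal_mult I J = ideal_generated {i * j | i j. i \<in> I \<and> j \<in> J}"

fun ideal_pow :: "'a::comm_ring_1 set \<Rightarrow> nat \<Rightarrow> 'a set" where
  "ideal_pow I 0 = UNIV"
| "ideal_pow I (Suc n) = ideal_mult I (ideal_pow I n)"

definition elem_mult :: "'a::comm_ring_1 \<Rightarrow> 'a set \<Rightarrow> 'a set" where
  "elem_mult a I = (\<lambda>x. a * x) ` I"

definition two_generated :: "'a::comm_ring_1 set \<Rightarrow> bool" where
  "two_generated I \<longleftrightarrow> (\<exists>x y. I = ideal_generated {x, y})"

definition nonzerodivisor :: "'a::comm_ring_1 \<Rightarrow> bool" where
  "nonzerodivisor x \<longleftrightarrow> (\<forall>y. x * y = 0 \<longrightarrow> y = 0)"

definition regular_ideal :: "'a::comm_ring_1 set \<Rightarrow> bool" where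
  "regular_ideal I \<longleftrightarrow> is_ideal I \<and> (\<exists>x\<in>I. nonzerodivisor x)"

definition maximal_ideal :: "'a::comm_ring_1 set \<Rightarrow> bool" where
  "maximal_ideal M \<longleftrightarrow> is_ideal M \<and> M \<noteq> UNIV \<and>
     (\<forall>J. is_ideal J \<and> M \<subseteq> J \<longrightarrow> J = M \<or> J = UNIV)"

text \<open>A local ring: exactly one maximal ideal (not necessarily Noetherian).\<close>
definition local_ring :: "'a::comm_ring_1 itself \<Rightarrow> bool" where
  "local_ring _ \<longleftrightarrow> (\<exists>!M::'a set. maximal_ideal M)"

end

theory Submission
  imports Defs
begin

text \<open>Let m be the maximal ideal. If I^n = I I^(n-1) is two-generated with n \<ge> 2, then
  I^n = x I^(n-1) for some x \<in> I. When the two generators are not minimal, I^n is principal,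
  and a Nakayama argument shows that a single product i j with i \<in> I already generates it.
  When they are minimal, I^n / m I^n is a plane over the residue field spanned by the images
  of the products; a rank argument yields x \<in> I such that x I^(n-1) contains two elements
  with unit determinant, and Cramer's rule puts both generators into x I^(n-1).
  As I is regular, x is a nonzerodivisor, so I^(n-1) \<cong> x I^(n-1) is two-generated as well.
  Descending to n = 2 gives I^2 = x I with I two-generated; the converse is immediate.\<close>

section \<open>Ideals\<close>

lemma is_ideal_ideal_generated: "is_ideal (ideal_generated S)"
  unfolding ideal_generated_def is_ideal_def by auto

lemma ideal_generated_superset: "S \<subseteq> ideal_generated S"
  unfolding ideal_generated_def by auto

lemma ideal_generated_least: "is_ideal J \<Longrightarrow> S \<subseteq> J \<Longrightarrow> ideal_generated S \<subseteq> J"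
  unfolding ideal_generated_def by auto

lemma ideal_closed_zero: "is_ideal J \<Longrightarrow> 0 \<in> J"
  unfolding is_ideal_def by auto

lemma ideal_closed_add: "is_ideal J \<Longrightarrow> x \<in> J \<Longrightarrow> y \<in> J \<Longrightarrow> x + y \<in> J"
  unfolding is_ideal_def by auto

lemma ideal_closed_mult: "is_ideal J \<Longrightarrow> x \<in> J \<Longrightarrow> r * x \<in> J"
  unfolding is_ideal_def by auto

lemma ideal_closed_mult_right: "is_ideal J \<Longrightarrow> x \<in> J \<Longrightarrow> x * r \<in> J"
  using ideal_closed_mult[of J x r] by (simp add: mult.commute)

lemma ideal_closed_uminus: "is_ideal J \<Longrightarrow> x \<in> J \<Longrightarrow> - x \<in> J"
  using ideal_closed_mult[of J x "-1"] by simp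

lemma ideal_closed_diff: "is_ideal J \<Longrightarrow> x \<in> J \<Longrightarrow> y \<in> J \<Longrightarrow> x - y \<in> J"
  using ideal_closed_add[of J x "- y"] ideal_closed_uminus[of J y] by simp

lemma ideal_closed_diff_cancel: "is_ideal J \<Longrightarrow> x - y \<in> J \<Longrightarrow> y \<in> J \<Longrightarrow> x \<in> J"
  using ideal_closed_add[of J "x - y" y] by simp

lemma is_ideal_ideal_mult: "is_ideal (ideal_mult I J)"
  unfolding ideal_mult_def by (rule is_ideal_ideal_generated)

lemma is_ideal_ideal_pow: "is_ideal (ideal_pow I n)"
  by (cases n) (simp add: is_ideal_def, simp only: ideal_pow.simps is_ideal_ideal_mult)

lemma mult_mem_ideal_mult: "x \<in> I \<Longrightarrow> y \<in> J \<Longrightarrow> x * y \<in> ideal_mult I J"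
  unfolding ideal_mult_def by (rule subsetD[OF ideal_generated_superset]) blast

lemma power_mem_ideal_pow: "r \<in> I \<Longrightarrow> r ^ n \<in> ideal_pow I n"
  by (induction n) (simp_all add: mult_mem_ideal_mult)

lemma ideal_mult_UNIV:
  assumes "is_ideal I"
  shows "ideal_mult I UNIV = I"
proof
  show "ideal_mult I UNIV \<subseteq> I"
    unfolding ideal_mult_def using assms
    by (intro ideal_generated_least) (auto intro: ideal_closed_mult_right)
  show "I \<subseteq> ideal_mult I UNIV"
    using mult_mem_ideal_mult[of _ I 1 UNIV] by auto
qed

lemma ideal_mult_ideal_mult_subset:
  "ideal_mult I (ideal_mult J K) \<subseteq> ideal_generated {i * (j * k) | i j k. i \<in> I \<and> j \<in> J \<and> k \<in> K}"
  (is "_ \<subseteq> ideal_generated ?G")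
proof -
  have "i * y \<in> ideal_generated ?G" if i: "i \<in> I" and y: "y \<in> ideal_mult J K" for i y
  proof -
    let ?T = "{y. i * y \<in> ideal_generated ?G}"
    have "is_ideal ?T"
      unfolding is_ideal_def using is_ideal_ideal_generated[of ?G]
      by (auto simp: distrib_left mult.left_commute intro: ideal_closed_zero ideal_closed_add ideal_closed_mult)
    moreover have "{j * k | j k. j \<in> J \<and> k \<in> K} \<subseteq> ?T"
      using i ideal_generated_superset[of ?G] by blast
    ultimately have "ideal_mult J K \<subseteq> ?T"
      unfolding ideal_mult_def by (rule ideal_generated_least)
    then show ?thesis using y by blast
  qed
  then show ?thesis
    unfolding ideal_mult_def[of I]
    by (intro ideal_generated_least is_ideal_ideal_generated) blast
qed

lemma ideal_generated_pair: "ideal_generated {u, v} = {a * u + b * v | a b. True}"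
proof
  have "is_ideal {a * u + b * v | a b. True}"
    unfolding is_ideal_def
  proof (intro conjI ballI allI)
    show "0 \<in> {a * u + b * v | a b. True}"
      by (rule CollectI, rule exI[of _ 0], rule exI[of _ 0]) simp
  next
    fix x y assume "x \<in> {a * u + b * v | a b. True}" "y \<in> {a * u + b * v | a b. True}"
    then obtain a b c d where "x = a * u + b * v" "y = c * u + d * v" by auto
    then have "x + y = (a + c) * u + (b + d) * v" by (simp add: algebra_simps)
    then show "x + y \<in> {a * u + b * v | a b. True}" by blast
  next
    fix r x assume "x \<in> {a * u + b * v | a b. True}"
    then obtain a b where "x = a * u + b * v" by auto
    then have "r * x = (r * a) * u + (r * b) * v" by (simp add: algebra_simps)
    then show "r * x \<in> {a * u + b * v | a b. True}" by blast
  qed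
  moreover have "u = 1 * u + 0 * v" "v = 0 * u + 1 * v" by simp_all
  then have "{u, v} \<subseteq> {a * u + b * v | a b. True}" by blast
  ultimately show "ideal_generated {u, v} \<subseteq> {a * u + b * v | a b. True}"
    by (rule ideal_generated_least)
next
  have "u \<in> ideal_generated {u, v}" "v \<in> ideal_generated {u, v}"
    using ideal_generated_superset[of "{u, v}"] by auto
  then show "{a * u + b * v | a b. True} \<subseteq> ideal_generated {u, v}"
    using is_ideal_ideal_generated[of "{u, v}"]
    by (auto intro!: ideal_closed_add ideal_closed_mult)
qed

lemma ideal_generated_pair_redundant:
  assumes "a * u + b * v = 0" and "a dvd 1"
  shows "ideal_generated {u, v} = {g * v | g. True}"
proof -
  obtain a' where a': "1 = a * a'" using assms(2) by (auto simp: dvd_def)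
  have "u = a' * (a * u)" using a' by (simp add: mult.assoc[symmetric] mult.commute)
  also have "a * u = - (b * v)" using assms(1) by (simp add: eq_neg_iff_add_eq_0)
  finally have u: "u = (- (a' * b)) * v" by simp
  show ?thesis
    unfolding ideal_generated_pair
  proof (intro set_eqI iffI)
    fix z assume "z \<in> {p * u + q * v | p q. True}"
    then obtain p q where "z = p * u + q * v" by auto
    then have "z = (q - p * a' * b) * v" by (subst (asm) u) (simp add: algebra_simps)
    then show "z \<in> {g * v | g. True}" by blast
  next
    fix z assume "z \<in> {g * v | g. True}"
    then obtain g where "z = 0 * u + g * v" by auto
    then show "z \<in> {p * u + q * v | p q. True}" by blast
  qed
qed

lemma elem_mult_ideal_generated_pair:
  "elem_mult a (ideal_generated {x, y}) = ideal_generated {a * x, a * y}"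
proof (intro set_eqI iffI)
  fix z assume "z \<in> elem_mult a (ideal_generated {x, y})"
  then obtain p q where "z = a * (p * x + q * y)"
    unfolding elem_mult_def ideal_generated_pair by auto
  then have "z = p * (a * x) + q * (a * y)" by (simp add: algebra_simps)
  then show "z \<in> ideal_generated {a * x, a * y}" unfolding ideal_generated_pair by blast
next
  fix z assume "z \<in> ideal_generated {a * x, a * y}"
  then obtain p q where "z = p * (a * x) + q * (a * y)"
    unfolding ideal_generated_pair by auto
  then have "z = a * (p * x + q * y)" by (simp add: algebra_simps)
  then show "z \<in> elem_mult a (ideal_generated {x, y})"
    unfolding elem_mult_def ideal_generated_pair by blast
qed

lemma is_ideal_elem_mult:
  assumes J: "is_ideal J"
  shows "is_ideal (elem_mult x J)"
  unfolding is_ideal_def elem_mult_def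
proof (intro conjI ballI allI)
  show "0 \<in> (*) x ` J" using ideal_closed_zero[OF J] by (rule image_eqI[rotated]) simp
next
  fix a b assume "a \<in> (*) x ` J" "b \<in> (*) x ` J"
  then obtain c d where "c \<in> J" "d \<in> J" "a = x * c" "b = x * d" by auto
  then show "a + b \<in> (*) x ` J"
    using ideal_closed_add[OF J] by (intro image_eqI[of _ _ "c + d"]) (simp_all add: distrib_left)
next
  fix r a assume "a \<in> (*) x ` J"
  then obtain c where "c \<in> J" "a = x * c" by auto
  then show "r * a \<in> (*) x ` J"
    using ideal_closed_mult[OF J] by (intro image_eqI[of _ _ "r * c"]) (simp_all add: mult.left_commute)
qed

section \<open>Local rings\<close>

abbreviation nonunits :: "'a::comm_ring_1 set" where
  "nonunits \<equiv> {x. \<not> x dvd 1}"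

lemma exists_maximal_ideal_containing_nonunit:
  fixes x :: "'a::comm_ring_1"
  assumes "\<not> x dvd 1"
  shows "\<exists>M. maximal_ideal M \<and> x \<in> M"
proof -
  define A where "A = {J::'a set. is_ideal J \<and> x \<in> J \<and> 1 \<notin> J}"
  have "is_ideal (elem_mult x UNIV)"
    by (rule is_ideal_elem_mult) (simp add: is_ideal_def)
  moreover have "x \<in> elem_mult x UNIV"
    unfolding elem_mult_def by (rule image_eqI[of _ _ 1]) simp_all
  moreover have "1 \<notin> elem_mult x UNIV"
    using assms unfolding elem_mult_def dvd_def by auto
  ultimately have "A \<noteq> {}" unfolding A_def by blast
  moreover have "\<Union>C \<in> A" if "C \<noteq> {}" and "subset.chain A C" for C
  proof -
    have CA: "C \<subseteq> A" and chain: "\<forall>X\<in>C. \<forall>Y\<in>C. X \<subseteq> Y \<or> Y \<subseteq> X"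
      using \<open>subset.chain A C\<close> by (auto simp: subset_chain_def)
    have "is_ideal (\<Union>C)"
      unfolding is_ideal_def
    proof (intro conjI ballI allI)
      show "0 \<in> \<Union>C" using \<open>C \<noteq> {}\<close> CA by (auto simp: A_def is_ideal_def)
    next
      fix a b assume "a \<in> \<Union>C" "b \<in> \<Union>C"
      then obtain J1 J2 where "J1 \<in> C" "J2 \<in> C" "a \<in> J1" "b \<in> J2" by auto
      with chain CA have "a + b \<in> J1 \<or> a + b \<in> J2"
        unfolding A_def by (metis (no_types, lifting) ideal_closed_add mem_Collect_eq subsetD)
      then show "a + b \<in> \<Union>C" using \<open>J1 \<in> C\<close> \<open>J2 \<in> C\<close> by blast
    next
      fix r a assume "a \<in> \<Union>C"
      then obtain J where "J \<in> C" "a \<in> J" by auto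
      then show "r * a \<in> \<Union>C" using CA unfolding A_def by (auto intro: ideal_closed_mult)
    qed
    then show ?thesis using CA \<open>C \<noteq> {}\<close> unfolding A_def by auto
  qed
  ultimately obtain M where M: "M \<in> A" and M_max: "\<forall>X\<in>A. M \<subseteq> X \<longrightarrow> X = M"
    using subset_Zorn_nonempty[of A] by blast
  have "maximal_ideal M"
    unfolding maximal_ideal_def
  proof (intro conjI allI impI)
    show "is_ideal M" and "M \<noteq> UNIV" using M unfolding A_def by auto
    fix J assume J: "is_ideal J \<and> M \<subseteq> J"
    show "J = M \<or> J = UNIV"
    proof (cases "1 \<in> J")
      case True
      then show ?thesis using J ideal_closed_mult[of J 1] by auto
    next
      case False
      then show ?thesis using J M M_max unfolding A_def by auto
    qed
  qed
  then show ?thesis using M unfolding A_def by auto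
qed

lemma local_ring_nonunits_ideal:
  assumes "local_ring TYPE('a::comm_ring_1)"
  shows "is_ideal (nonunits :: 'a set)"
proof -
  obtain M :: "'a set" where M: "maximal_ideal M" and unique: "\<And>N. maximal_ideal N \<Longrightarrow> N = M"
    using assms unfolding local_ring_def by auto
  have "nonunits \<subseteq> M"
    using exists_maximal_ideal_containing_nonunit unique by blast
  moreover have "M \<subseteq> nonunits"
  proof
    fix y assume "y \<in> M"
    show "y \<in> nonunits"
    proof (rule CollectI, rule notI)
      assume "y dvd 1"
      then obtain z where "1 = y * z" by (auto simp: dvd_def)
      then have "r = y * (z * r)" for r by (metis mult.assoc mult_1_left)
      then have "r \<in> M" for r
        using \<open>y \<in> M\<close> M ideal_closed_mult_right unfolding maximal_ideal_def by metis
      then show False using M unfolding maximal_ideal_def by auto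
    qed
  qed
  ultimately show ?thesis using M unfolding maximal_ideal_def by auto
qed

lemma nonunit_mult_cancel_unit:
  "(x::'a::comm_ring_1) * y \<in> nonunits \<Longrightarrow> y \<notin> nonunits \<Longrightarrow> x \<in> nonunits"
  using mult_dvd_mono[of x 1 y 1] by auto

lemma unit_one_minus_nonunit:
  assumes "is_ideal (nonunits :: 'a::comm_ring_1 set)" and "(g::'a) \<in> nonunits"
  shows "1 - g dvd 1"
proof (rule ccontr)
  assume "\<not> 1 - g dvd 1"
  then have "(1 - g) + g \<in> nonunits" using assms ideal_closed_add by blast
  then show False by simp
qed

lemma eq_zero_if_nonunit_multiple:
  assumes "is_ideal (nonunits :: 'a::comm_ring_1 set)" and "(g::'a) \<in> nonunits" and "w = g * w"
  shows "w = 0"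
proof -
  obtain e where e: "1 = (1 - g) * e"
    using unit_one_minus_nonunit[OF assms(1,2)] by (auto simp: dvd_def)
  have "w = e * ((1 - g) * w)" using e by (metis mult.commute mult.left_commute mult_1)
  also have "(1 - g) * w = 0" using assms(3) by (simp add: algebra_simps)
  finally show ?thesis by simp
qed

section \<open>Two-generated ideals of the form I \<cdot> I \<cdot> J\<close>

lemma ideal_mult_principal_eq_elem_mult:
  fixes I Q :: "'a::comm_ring_1 set"
  assumes nonunits_ideal: "is_ideal (nonunits :: 'a set)" and Q: "is_ideal Q"
    and principal: "ideal_mult I Q = {g * w | g. True}"
    and nonzero: "ideal_mult I Q \<noteq> {0}"
  shows "\<exists>x\<in>I. ideal_mult I Q = elem_mult x Q"
proof -
  have "\<exists>i\<in>I. \<exists>j\<in>Q. \<exists>g. i * j = g * w \<and> g dvd 1"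
  proof (rule ccontr)
    assume no_unit: "\<not> ?thesis"
    have "i * j \<in> elem_mult w nonunits" if ij: "i \<in> I" "j \<in> Q" for i j
    proof -
      obtain g where "i * j = g * w"
        using mult_mem_ideal_mult[OF ij] principal by auto
      with no_unit ij show ?thesis
        unfolding elem_mult_def by (auto simp: mult.commute)
    qed
    then have "ideal_mult I Q \<subseteq> elem_mult w nonunits"
      unfolding ideal_mult_def
      by (intro ideal_generated_least is_ideal_elem_mult[OF nonunits_ideal]) blast
    moreover have "w \<in> ideal_mult I Q"
      using principal by (auto intro: exI[of _ 1])
    ultimately obtain g where "g \<in> nonunits" "w = g * w"
      unfolding elem_mult_def by (auto simp: mult.commute)
    then have "w = 0" by (rule eq_zero_if_nonunit_multiple[OF nonunits_ideal])
    then show False using principal nonzero by auto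
  qed
  then obtain i j g where ij: "i \<in> I" "j \<in> Q" "i * j = g * w" and "g dvd 1" by blast
  then obtain e where "1 = g * e" by (auto simp: dvd_def)
  then have w: "w = i * (e * j)" using ij(3) by (metis mult.assoc mult.commute mult_1)
  have "ideal_mult I Q = elem_mult i Q"
  proof
    show "ideal_mult I Q \<subseteq> elem_mult i Q"
    proof
      fix z assume "z \<in> ideal_mult I Q"
      then obtain d where "z = d * w" using principal by auto
      then have "z = i * (d * (e * j))" using w by (simp add: algebra_simps)
      moreover have "d * (e * j) \<in> Q" using ij(2) Q ideal_closed_mult by metis
      ultimately show "z \<in> elem_mult i Q" unfolding elem_mult_def by blast
    qed
    show "elem_mult i Q \<subseteq> ideal_mult I Q"
      unfolding elem_mult_def using mult_mem_ideal_mult[OF ij(1)] by blast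
  qed
  then show ?thesis using ij(1) by blast
qed

locale minimal_two_generated =
  fixes I J :: "'a::comm_ring_1 set" and u v :: 'a
  assumes nonunits_ideal: "is_ideal (nonunits :: 'a set)"
    and is_ideal_I: "is_ideal I"
    and generators: "ideal_mult I (ideal_mult I J) = ideal_generated {u, v}"
    and minimal: "a * u + b * v = 0 \<Longrightarrow> a \<in> nonunits \<and> b \<in> nonunits"
begin

abbreviation IJ :: "'a set" where "IJ \<equiv> ideal_mult I J"
abbreviation IIJ :: "'a set" where "IIJ \<equiv> ideal_mult I IJ"

abbreviation products :: "'a set" where
  "products \<equiv> {a * (b * c) | a b c. a \<in> I \<and> b \<in> I \<and> c \<in> J}"

abbreviation cong_nonunits :: "'a \<Rightarrow> 'a \<Rightarrow> bool" (infix "\<approx>" 50) where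
  "x \<approx> y \<equiv> x - y \<in> nonunits"

lemma cong_sym: "x \<approx> y \<Longrightarrow> y \<approx> x"
  using ideal_closed_uminus[OF nonunits_ideal, of "x - y"] by simp

lemma cong_trans: "x \<approx> y \<Longrightarrow> y \<approx> z \<Longrightarrow> x \<approx> z"
  using ideal_closed_add[OF nonunits_ideal, of "x - y" "y - z"] by simp

lemma cong_nonunit: "x \<approx> y \<Longrightarrow> y \<in> nonunits \<Longrightarrow> x \<in> nonunits"
  by (rule ideal_closed_diff_cancel[OF nonunits_ideal])

lemma cong_mult: "x \<approx> x' \<Longrightarrow> y \<approx> y' \<Longrightarrow> x * y \<approx> x' * y'"
proof -
  assume "x \<approx> x'" "y \<approx> y'"
  then have "x * (y - y') + (x - x') * y' \<in> nonunits"
    by (intro ideal_closed_add[OF nonunits_ideal] ideal_closed_mult[OF nonunits_ideal]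
        ideal_closed_mult_right[OF nonunits_ideal])
  then show ?thesis by (simp add: algebra_simps)
qed

lemma cong_diff: "x \<approx> x' \<Longrightarrow> y \<approx> y' \<Longrightarrow> x - y \<approx> x' - y'"
  using ideal_closed_diff[OF nonunits_ideal, of "x - x'" "y - y'"] by (simp add: algebra_simps)

text \<open>The coordinates are arbitrary outside IIJ; by minimality of the generators they are
  unique modulo the maximal ideal, and coeff_det is the determinant over the residue field.\<close>

definition coeffs :: "'a \<Rightarrow> 'a \<times> 'a" where
  "coeffs z = (SOME c. z = fst c * u + snd c * v)"

abbreviation coeff_u :: "'a \<Rightarrow> 'a" where "coeff_u z \<equiv> fst (coeffs z)"
abbreviation coeff_v :: "'a \<Rightarrow> 'a" where "coeff_v z \<equiv> snd (coeffs z)"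

definition coeff_det :: "'a \<Rightarrow> 'a \<Rightarrow> 'a" where
  "coeff_det z w = coeff_u z * coeff_v w - coeff_v z * coeff_u w"

lemma mem_IIJ_iff: "z \<in> IIJ \<longleftrightarrow> (\<exists>a b. z = a * u + b * v)"
  by (simp add: generators ideal_generated_pair)

lemma generators_mem_IIJ: "u \<in> IIJ" "v \<in> IIJ"
  using generators ideal_generated_superset[of "{u, v}"] by auto

lemma coeffs_repr: "z \<in> IIJ \<Longrightarrow> z = coeff_u z * u + coeff_v z * v"
proof -
  assume "z \<in> IIJ"
  then have "\<exists>p. z = fst p * u + snd p * v" by (auto simp: mem_IIJ_iff)
  then show ?thesis unfolding coeffs_def by (rule someI_ex)
qed

lemma coeffs_cong: "z = a * u + b * v \<Longrightarrow> coeff_u z \<approx> a \<and> coeff_v z \<approx> b"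
proof -
  assume z: "z = a * u + b * v"
  then have "z \<in> IIJ" by (auto simp: mem_IIJ_iff)
  from coeffs_repr[OF this] z have "(coeff_u z - a) * u + (coeff_v z - b) * v = 0"
    by (simp add: algebra_simps)
  then show ?thesis by (rule minimal)
qed

lemma coeffs_add:
  assumes "z \<in> IIJ" "w \<in> IIJ"
  shows "coeff_u (z + w) \<approx> coeff_u z + coeff_u w" and "coeff_v (z + w) \<approx> coeff_v z + coeff_v w"
proof -
  have "z + w = (coeff_u z + coeff_u w) * u + (coeff_v z + coeff_v w) * v"
    using coeffs_repr[OF assms(1)] coeffs_repr[OF assms(2)] by (simp add: algebra_simps)
  from coeffs_cong[OF this] show "coeff_u (z + w) \<approx> coeff_u z + coeff_u w"
    and "coeff_v (z + w) \<approx> coeff_v z + coeff_v w" by simp_all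
qed

lemma coeffs_mult:
  assumes "z \<in> IIJ"
  shows "coeff_u (r * z) \<approx> r * coeff_u z" and "coeff_v (r * z) \<approx> r * coeff_v z"
proof -
  have "r * z = (r * coeff_u z) * u + (r * coeff_v z) * v"
    by (subst coeffs_repr[OF assms]) (simp add: algebra_simps)
  from coeffs_cong[OF this] show "coeff_u (r * z) \<approx> r * coeff_u z"
    and "coeff_v (r * z) \<approx> r * coeff_v z" by simp_all
qed

lemma coeffs_add_negligible:
  assumes "z \<in> IIJ" "w \<in> IIJ" "coeff_u w \<in> nonunits" "coeff_v w \<in> nonunits"
  shows "coeff_u (z + w) \<approx> coeff_u z \<and> coeff_v (z + w) \<approx> coeff_v z"
proof -
  have "coeff_u z + coeff_u w \<approx> coeff_u z" "coeff_v z + coeff_v w \<approx> coeff_v z"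
    using assms(3,4) by simp_all
  then show ?thesis using coeffs_add[OF assms(1,2)] cong_trans by blast
qed

lemma coeff_det_cong:
  assumes "coeff_u z \<approx> a" "coeff_v z \<approx> b" "coeff_u w \<approx> c" "coeff_v w \<approx> d"
  shows "coeff_det z w \<approx> a * d - b * c"
  unfolding coeff_det_def using assms by (intro cong_diff cong_mult)

lemma coeff_det_add:
  assumes "z \<in> IIJ" "w \<in> IIJ"
  shows "coeff_det s (z + w) \<approx> coeff_det s z + coeff_det s w"
proof -
  have "coeff_det s (z + w)
          \<approx> coeff_u s * (coeff_v z + coeff_v w) - coeff_v s * (coeff_u z + coeff_u w)"
    using coeffs_add[OF assms] by (intro coeff_det_cong) simp_all
  then show ?thesis by (simp add: coeff_det_def algebra_simps)
qed

lemma coeff_det_mult: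
  assumes "z \<in> IIJ"
  shows "coeff_det s (r * z) \<approx> r * coeff_det s z"
proof -
  have "coeff_det s (r * z) \<approx> coeff_u s * (r * coeff_v z) - coeff_v s * (r * coeff_u z)"
    using coeffs_mult[OF assms] by (intro coeff_det_cong) simp_all
  then show ?thesis by (simp add: coeff_det_def algebra_simps)
qed

lemma products_subset_IIJ: "products \<subseteq> IIJ"
  by (auto intro!: mult_mem_ideal_mult)

lemma nonunit_on_IIJ_if_nonunit_on_products:
  assumes add: "\<And>z w. z \<in> IIJ \<Longrightarrow> w \<in> IIJ \<Longrightarrow> f (z + w) \<approx> f z + f w"
    and mult: "\<And>r z. z \<in> IIJ \<Longrightarrow> f (r * z) \<approx> r * f z"
    and on_products: "\<And>z. z \<in> products \<Longrightarrow> f z \<in> nonunits"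
    and z: "z \<in> IIJ"
  shows "f z \<in> nonunits"
proof -
  let ?K = "{z \<in> IIJ. f z \<in> nonunits}"
  have "is_ideal ?K"
    unfolding is_ideal_def
  proof (intro conjI ballI allI)
    have "f (0 * u) \<approx> 0 * f u" using mult generators_mem_IIJ(1) by blast
    then show "0 \<in> ?K" using ideal_closed_zero[OF is_ideal_ideal_mult] by simp
  next
    fix x y assume x: "x \<in> ?K" and y: "y \<in> ?K"
    have "x + y \<in> IIJ" by (rule ideal_closed_add[OF is_ideal_ideal_mult]) (use x y in auto)
    moreover have "f x + f y \<in> nonunits"
      by (rule ideal_closed_add[OF nonunits_ideal]) (use x y in auto)
    ultimately show "x + y \<in> ?K" using add[of x y] x y cong_nonunit by auto
  next
    fix r x assume x: "x \<in> ?K"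
    have "r * x \<in> IIJ" by (rule ideal_closed_mult[OF is_ideal_ideal_mult]) (use x in auto)
    moreover have "r * f x \<in> nonunits"
      by (rule ideal_closed_mult[OF nonunits_ideal]) (use x in auto)
    ultimately show "r * x \<in> ?K" using mult[of x r] x cong_nonunit by auto
  qed
  moreover have "products \<subseteq> ?K" using on_products products_subset_IIJ by blast
  ultimately have "ideal_generated products \<subseteq> ?K" by (rule ideal_generated_least)
  then show ?thesis using z ideal_mult_ideal_mult_subset[of I I J] by auto
qed

lemma exists_products_unit_coeff_det: "\<exists>s\<in>products. \<exists>t\<in>products. coeff_det s t \<notin> nonunits"
proof -
  have "\<exists>s\<in>products. coeff_u s \<notin> nonunits"
  proof (rule ccontr)
    assume no_unit: "\<not> ?thesis"
    have "coeff_u u \<in> nonunits"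
      by (rule nonunit_on_IIJ_if_nonunit_on_products[OF coeffs_add(1) coeffs_mult(1) _
          generators_mem_IIJ(1)]) (use no_unit in auto)
    moreover have "1 \<approx> coeff_u u" by (rule cong_sym) (use coeffs_cong[of u 1 0] in simp)
    ultimately show False using cong_nonunit[of 1 "coeff_u u"] by simp
  qed
  then obtain s where s: "s \<in> products" "coeff_u s \<notin> nonunits" by blast
  have "\<exists>t\<in>products. coeff_det s t \<notin> nonunits"
  proof (rule ccontr)
    assume no_unit: "\<not> ?thesis"
    have det_nonunit: "coeff_det s v \<in> nonunits"
      by (rule nonunit_on_IIJ_if_nonunit_on_products[OF coeff_det_add coeff_det_mult _
          generators_mem_IIJ(2)]) (use no_unit in auto)
    have "coeff_det s v \<approx> coeff_u s * 1 - coeff_v s * 0"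
      using coeffs_cong[of v 0 1] by (intro coeff_det_cong) simp_all
    then have "coeff_det s v \<approx> coeff_u s" by simp
    then have "coeff_u s \<approx> coeff_det s v" by (rule cong_sym)
    from cong_nonunit[OF this det_nonunit] s(2) show False by simp
  qed
  then show ?thesis using s(1) by blast
qed

lemma elem_mult_eq_if_unit_coeff_det:
  assumes x: "x \<in> I" and YZ: "Y \<in> IJ" "Z \<in> IJ" and unit: "coeff_det (x * Y) (x * Z) \<notin> nonunits"
  shows "IIJ = elem_mult x IJ"
proof
  show "elem_mult x IJ \<subseteq> IIJ"
    unfolding elem_mult_def using mult_mem_ideal_mult[OF x] by blast
next
  define p q where "p = x * Y" and "q = x * Z"
  have "p \<in> IIJ" "q \<in> IIJ" unfolding p_def q_def using mult_mem_ideal_mult x YZ by blast+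
  then obtain a b c d where p: "p = a * u + b * v" and q: "q = c * u + d * v"
    and det: "coeff_det p q = a * d - b * c"
    using coeffs_repr unfolding coeff_det_def by blast
  obtain e where e: "1 = (a * d - b * c) * e"
    using unit det unfolding p_def q_def by (auto simp: dvd_def)
  have "u = (a * d - b * c) * e * u" using e by simp
  also have "\<dots> = e * (d * p - b * q)" using p q by (simp add: algebra_simps)
  also have "\<dots> = x * (e * (d * Y - b * Z))" unfolding p_def q_def by (simp add: algebra_simps)
  finally have u_mem: "u \<in> elem_mult x IJ"
    unfolding elem_mult_def using YZ is_ideal_ideal_mult
    by (blast intro: ideal_closed_mult ideal_closed_diff)
  have "v = (a * d - b * c) * e * v" using e by simp
  also have "\<dots> = e * (a * q - c * p)" using p q by (simp add: algebra_simps)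
  also have "\<dots> = x * (e * (a * Z - c * Y))" unfolding p_def q_def by (simp add: algebra_simps)
  finally have v_mem: "v \<in> elem_mult x IJ"
    unfolding elem_mult_def using YZ is_ideal_ideal_mult
    by (blast intro: ideal_closed_mult ideal_closed_diff)
  show "IIJ \<subseteq> elem_mult x IJ"
    unfolding generators using u_mem v_mem
    by (intro ideal_generated_least is_ideal_elem_mult is_ideal_ideal_mult) auto
qed

lemma coeffs_nonunit_if_dependent:
  assumes "coeff_det p q \<notin> nonunits"
    and "coeff_det p r \<in> nonunits" and "coeff_det q r \<in> nonunits"
  shows "coeff_u r \<in> nonunits \<and> coeff_v r \<in> nonunits"
proof
  have "coeff_u r * coeff_det p q = coeff_u q * coeff_det p r - coeff_u p * coeff_det q r"
    by (simp add: coeff_det_def algebra_simps)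
  also have "\<dots> \<in> nonunits"
    using assms(2,3) by (intro ideal_closed_diff[OF nonunits_ideal] ideal_closed_mult[OF nonunits_ideal])
  finally show "coeff_u r \<in> nonunits" using assms(1) by (rule nonunit_mult_cancel_unit)
  have "coeff_v r * coeff_det p q = coeff_v q * coeff_det p r - coeff_v p * coeff_det q r"
    by (simp add: coeff_det_def algebra_simps)
  also have "\<dots> \<in> nonunits"
    using assms(2,3) by (intro ideal_closed_diff[OF nonunits_ideal] ideal_closed_mult[OF nonunits_ideal])
  finally show "coeff_v r \<in> nonunits" using assms(1) by (rule nonunit_mult_cancel_unit)
qed

text \<open>If every x in I maps IJ onto at most a line of IIJ modulo the maximal ideal, take
  products p = a B and q = c E with independent images. Then a E and c B are dependent on
  both p and q, hence vanish modulo the maximal ideal, so a + c maps B and E to p and q,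
  contradicting that its image is at most a line.\<close>

lemma exists_elem_mult_eq: "\<exists>x\<in>I. IIJ = elem_mult x IJ"
proof (rule ccontr)
  assume no_x: "\<not> ?thesis"
  have dependent: "coeff_det (x * Y) (x * Z) \<in> nonunits" if "x \<in> I" "Y \<in> IJ" "Z \<in> IJ" for x Y Z
    using elem_mult_eq_if_unit_coeff_det[OF that] no_x that by blast
  obtain a b c d y z where abcd: "a \<in> I" "b \<in> I" "c \<in> I" "d \<in> I" and yz: "y \<in> J" "z \<in> J"
    and unit: "coeff_det (a * (b * y)) (c * (d * z)) \<notin> nonunits"
    using exists_products_unit_coeff_det by blast
  define B E where "B = b * y" and "E = d * z"
  have BE: "B \<in> IJ" "E \<in> IJ" "a * y \<in> IJ" "c * y \<in> IJ" "a * z \<in> IJ" "c * z \<in> IJ"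
    unfolding B_def E_def using abcd yz by (auto intro: mult_mem_ideal_mult)
  have in_IIJ: "a * B \<in> IIJ" "c * B \<in> IIJ" "a * E \<in> IIJ" "c * E \<in> IIJ"
    using abcd BE by (auto intro: mult_mem_ideal_mult)
  have unit': "coeff_det (a * B) (c * E) \<notin> nonunits"
    using unit unfolding B_def E_def .
  have "coeff_det (b * (a * y)) (b * (c * y)) \<in> nonunits"
    using dependent abcd BE by blast
  then have aB_cB: "coeff_det (a * B) (c * B) \<in> nonunits"
    unfolding B_def by (simp add: mult.left_commute)
  have "coeff_det (d * (c * z)) (d * (a * z)) \<in> nonunits"
    using dependent abcd BE by blast
  then have cE_aE: "coeff_det (c * E) (a * E) \<in> nonunits"
    unfolding E_def by (simp add: mult.left_commute)
  have aE: "coeff_u (a * E) \<in> nonunits \<and> coeff_v (a * E) \<in> nonunits"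
    by (rule coeffs_nonunit_if_dependent[OF unit' dependent[OF abcd(1) BE(1,2)] cE_aE])
  have cB: "coeff_u (c * B) \<in> nonunits \<and> coeff_v (c * B) \<in> nonunits"
    by (rule coeffs_nonunit_if_dependent[OF unit' aB_cB dependent[OF abcd(3) BE(2,1)]])
  have "(a + c) * B = a * B + c * B" and "(a + c) * E = c * E + a * E"
    by (simp_all add: algebra_simps)
  then have "coeff_det ((a + c) * B) ((a + c) * E) \<approx> coeff_det (a * B) (c * E)"
    (is "?det_sum \<approx> _")
    using coeffs_add_negligible[of "a * B" "c * B"] coeffs_add_negligible[of "c * E" "a * E"]
      in_IIJ aE cB
    unfolding coeff_det_def[of "a * B"] by (intro coeff_det_cong) auto
  then have "coeff_det (a * B) (c * E) \<approx> ?det_sum" by (rule cong_sym)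
  moreover have "?det_sum \<in> nonunits"
    using dependent[OF ideal_closed_add[OF is_ideal_I abcd(1,3)] BE(1,2)] .
  ultimately show False using unit' cong_nonunit by blast
qed

end

lemma two_generated_ideal_mult_eq_elem_mult:
  fixes I J :: "'a::comm_ring_1 set"
  assumes local: "local_ring TYPE('a)" and I: "is_ideal I"
    and two_gen: "two_generated (ideal_mult I (ideal_mult I J))"
    and nonzero: "ideal_mult I (ideal_mult I J) \<noteq> {0}"
  shows "\<exists>x\<in>I. ideal_mult I (ideal_mult I J) = elem_mult x (ideal_mult I J)"
proof -
  have nonunits_ideal: "is_ideal (nonunits :: 'a set)"
    by (rule local_ring_nonunits_ideal[OF local])
  obtain u v where gen: "ideal_mult I (ideal_mult I J) = ideal_generated {u, v}"
    using two_gen unfolding two_generated_def by blast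
  show ?thesis
  proof (cases "\<forall>a b. a * u + b * v = 0 \<longrightarrow> a \<in> nonunits \<and> b \<in> nonunits")
    case True
    then interpret minimal_two_generated I J u v
      using nonunits_ideal I gen by unfold_locales auto
    show ?thesis by (rule exists_elem_mult_eq)
  next
    case False
    then obtain a b where "a * u + b * v = 0" and "a dvd 1 \<or> b dvd 1" by auto
    then obtain w where "ideal_mult I (ideal_mult I J) = {g * w | g. True}"
      using ideal_generated_pair_redundant[of a u b v] ideal_generated_pair_redundant[of b v a u] gen
      by (metis add.commute insert_commute)
    then show ?thesis
      using ideal_mult_principal_eq_elem_mult[OF nonunits_ideal is_ideal_ideal_mult] nonzero by blast
  qed
qed

section \<open>Regular ideals\<close>

lemma nonzerodivisor_power: "nonzerodivisor r \<Longrightarrow> nonzerodivisor (r ^ n)"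
proof (induction n)
  case (Suc n)
  show ?case unfolding nonzerodivisor_def
  proof (intro allI impI)
    fix y assume "r ^ Suc n * y = 0"
    then have "r * (r ^ n * y) = 0" by (simp add: mult.assoc)
    then show "y = 0" using Suc unfolding nonzerodivisor_def by blast
  qed
qed (simp add: nonzerodivisor_def)

lemma nonzerodivisor_nonzero: "nonzerodivisor (r::'a::comm_ring_1) \<Longrightarrow> r \<noteq> 0"
  unfolding nonzerodivisor_def by (metis mult_zero_left zero_neq_one)

lemma nonzerodivisor_factor: "nonzerodivisor (x * y) \<Longrightarrow> nonzerodivisor x"
  unfolding nonzerodivisor_def by (metis mult.commute mult.left_commute mult_zero_right)

lemma two_generated_elem_mult_cancel:
  assumes x: "nonzerodivisor x" and J: "is_ideal J" and two_gen: "two_generated (elem_mult x J)"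
  shows "two_generated J"
proof -
  obtain u v where gen: "elem_mult x J = ideal_generated {u, v}"
    using two_gen unfolding two_generated_def by blast
  then have "u \<in> elem_mult x J" "v \<in> elem_mult x J" using ideal_generated_superset by blast+
  then obtain u' v' where u': "u' \<in> J" "u = x * u'" and v': "v' \<in> J" "v = x * v'"
    unfolding elem_mult_def by auto
  have "J = ideal_generated {u', v'}"
  proof
    show "ideal_generated {u', v'} \<subseteq> J" using J u' v' by (intro ideal_generated_least) auto
    show "J \<subseteq> ideal_generated {u', v'}"
    proof
      fix y assume "y \<in> J"
      then have "x * y \<in> ideal_generated {u, v}" unfolding gen[symmetric] elem_mult_def by auto
      then obtain a b where "x * y = a * u + b * v" unfolding ideal_generated_pair by auto
      then have "x * (y - (a * u' + b * v')) = 0" using u' v' by (simp add: algebra_simps)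
      then have "y = a * u' + b * v'" using x unfolding nonzerodivisor_def by auto
      then show "y \<in> ideal_generated {u', v'}" unfolding ideal_generated_pair by blast
    qed
  qed
  then show ?thesis unfolding two_generated_def by blast
qed

lemma regular_ideal_pow_Suc_Suc_eq_elem_mult:
  fixes I :: "'a::comm_ring_1 set"
  assumes local: "local_ring TYPE('a)" and regular: "regular_ideal I"
    and two_gen: "two_generated (ideal_pow I (Suc (Suc k)))"
  shows "\<exists>x\<in>I. nonzerodivisor x \<and> ideal_pow I (Suc (Suc k)) = elem_mult x (ideal_pow I (Suc k))"
proof -
  obtain r where r: "r \<in> I" "nonzerodivisor r" and I: "is_ideal I"
    using regular unfolding regular_ideal_def by blast
  have r_pow: "r ^ Suc (Suc k) \<in> ideal_pow I (Suc (Suc k))" "nonzerodivisor (r ^ Suc (Suc k))"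
    using power_mem_ideal_pow[OF r(1)] nonzerodivisor_power[OF r(2)] by blast+
  then have "ideal_pow I (Suc (Suc k)) \<noteq> {0}" using nonzerodivisor_nonzero by blast
  then obtain x where x: "x \<in> I" and eq: "ideal_pow I (Suc (Suc k)) = elem_mult x (ideal_pow I (Suc k))"
    using two_generated_ideal_mult_eq_elem_mult[OF local I, of "ideal_pow I k"] two_gen by auto
  obtain y where "r ^ Suc (Suc k) = x * y" using r_pow(1) unfolding eq elem_mult_def by auto
  then have "nonzerodivisor x" using r_pow(2) nonzerodivisor_factor by metis
  then show ?thesis using x eq by blast
qed

lemma two_generated_ideal_pow_Suc:
  fixes I :: "'a::comm_ring_1 set"
  assumes local: "local_ring TYPE('a)" and regular: "regular_ideal I"
    and two_gen: "two_generated (ideal_pow I (Suc (Suc k)))"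
  shows "two_generated (ideal_pow I (Suc k))"
proof -
  obtain x where "nonzerodivisor x" and "ideal_pow I (Suc (Suc k)) = elem_mult x (ideal_pow I (Suc k))"
    using regular_ideal_pow_Suc_Suc_eq_elem_mult[OF assms] by blast
  then show ?thesis
    using two_gen two_generated_elem_mult_cancel is_ideal_ideal_pow by metis
qed

lemma two_generated_ideal_pow_2:
  fixes I :: "'a::comm_ring_1 set"
  assumes local: "local_ring TYPE('a)" and regular: "regular_ideal I"
    and two_gen: "two_generated (ideal_pow I (Suc (Suc k)))"
  shows "two_generated (ideal_pow I 2)"
  using two_gen
proof (induction k)
  case 0
  then show ?case by (simp add: numeral_2_eq_2)
next
  case (Suc k)
  then show ?case using two_generated_ideal_pow_Suc[OF local regular] by blast
qed

theorem proposition5p1: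
  fixes I :: "'a::comm_ring_1 set"
  assumes "local_ring TYPE('a)"
    and "regular_ideal I"
  shows "(\<exists>n::nat. n > 1 \<and> two_generated (ideal_pow I n)) \<longleftrightarrow>
         (two_generated I \<and> (\<exists>a\<in>I. ideal_pow I 2 = elem_mult a I))"
proof
  have I: "is_ideal I" using assms(2) unfolding regular_ideal_def by blast
  assume "\<exists>n::nat. n > 1 \<and> two_generated (ideal_pow I n)"
  then obtain n where "n > 1" and two_gen: "two_generated (ideal_pow I n)" by blast
  obtain k where n: "n = Suc (Suc k)" using less_imp_Suc_add[OF \<open>n > 1\<close>] by auto
  have two_gen_2: "two_generated (ideal_pow I (Suc (Suc 0)))"
    using two_generated_ideal_pow_2[OF assms two_gen[unfolded n]] by (simp add: numeral_2_eq_2)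
  have "two_generated I"
    using two_generated_ideal_pow_Suc[OF assms two_gen_2] by (simp add: ideal_mult_UNIV[OF I])
  moreover obtain a where "a \<in> I" "ideal_pow I (Suc (Suc 0)) = elem_mult a (ideal_pow I (Suc 0))"
    using regular_ideal_pow_Suc_Suc_eq_elem_mult[OF assms two_gen_2] by blast
  ultimately show "two_generated I \<and> (\<exists>a\<in>I. ideal_pow I 2 = elem_mult a I)"
    by (auto simp: numeral_2_eq_2 ideal_mult_UNIV[OF I])
next
  assume "two_generated I \<and> (\<exists>a\<in>I. ideal_pow I 2 = elem_mult a I)"
  then obtain x y a where "I = ideal_generated {x, y}" and "ideal_pow I 2 = elem_mult a I"
    unfolding two_generated_def by blast
  then have "ideal_pow I 2 = ideal_generated {a * x, a * y}"
    by (simp add: elem_mult_ideal_generated_pair)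
  then show "\<exists>n::nat. n > 1 \<and> two_generated (ideal_pow I n)"
    unfolding two_generated_def by (intro exI[of _ 2]) auto
qed

end
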